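(* Let $N\in\mathbb{N}$. Let $$\widehat{\mathcal{B}_1'}(N)=\{(q_1',q_2')\in\mathbb{Z}^2 \mid 2q_1'^2+2q_2'^2+q_2'=N\},$$ let $M'=\{(q_1',q_2')\in\mathbb{Z}^2\mid q_1'+q_2'\text{ even}\}$ and $L'=\mathbb{Z}^2$, let $\mathcal{U}(8N+1)=\{(x,y)\in\mathbb{Z}^2\mid x^2+y^2=8N+1\}$, and let $\varphi:\widehat{\mathcal{B}_1'}(N)\to \mathcal{U}(8N+1)$ be the (well-defined) map $\varphi(q_1',q_2')=(4q_1',\,4q_2'+1)$. Let the cyclic group $C_4=\langle r\rangle$ act on $\mathcal{U}(8N+1)$ by $r(x,y)=(-y,x)$. Then: (1) the action of $C_4$ on $\mathcal{U}(8N+1)$ is free; (2) the sets $\varphi(\widehat{\mathcal{B}_1'}(N)\cap M')$ and $\varphi(\widehat{\mathcal{B}_1'}(N)\cap (L'\setminus M'))$ are disjoint, and $\varphi(\widehat{\mathcal{B}_1'}(N))$ is a complete set of representatives of the $C_4$-orbits of $\mathcal{U}(8N+1)$.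
   Context: The expression $2q_1'^2+2q_2'^2+q_2'$ is the $\Lambda_1$-atomic length of the translation $t_q$ in the extended affine Weyl group of type $C_2^{(1)}$, for $q$ in the coweight lattice $L=\{\sqrt2 q_1\varepsilon_1+\sqrt2 q_2\varepsilon_2\mid q_1,q_2\in\frac12\mathbb{Z}\}$, rewritten in the coordinates $(q_1',q_2')=(q_1+q_2,q_1-q_2)$; $M'$ corresponds to the sublattice $M=\sqrt2\mathbb{Z}\varepsilon_1\oplus\sqrt2\mathbb{Z}\varepsilon_2$. *)

theory Defs
  imports Main
begin

definition Bhat1 :: "nat \<Rightarrow> (int \<times> int) set" where
  "Bhat1 N = {(q1, q2). 2 * q1^2 + 2 * q2^2 + q2 = int N}"

text \<open>The sublattice M' = {(q1',q2') in Z^2 | q1'+q2' even}; L' = Z^2 is UNIV.\<close>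
definition Mprime :: "(int \<times> int) set" where
  "Mprime = {(q1, q2). even (q1 + q2)}"

definition U :: "int \<Rightarrow> (int \<times> int) set" where
  "U m = {(x, y). x^2 + y^2 = m}"

definition phi :: "int \<times> int \<Rightarrow> int \<times> int" where
  "phi q = (4 * fst q, 4 * snd q + 1)"

text \<open>The generator r of C_4 acting by r(x,y) = (-y,x); r^k acts as rot ^^ k.\<close>
definition rot :: "int \<times> int \<Rightarrow> int \<times> int" where
  "rot p = (- snd p, fst p)"

definition C4_orbit :: "int \<times> int \<Rightarrow> (int \<times> int) set" where
  "C4_orbit p = {(rot ^^ k) p | k. k < 4}"

end

theory Submission imports Defs begin

text \<open>The image of phi is the set of points with coordinates congruent to (0, 1) modulo 4, and on
  it the circle equation x^2 + y^2 = 8N + 1 is 8 times the defining equation of Bhat1 N, shifted by 1.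
  A point with x^2 + y^2 \<equiv> 1 (mod 8) has one coordinate divisible by 4 and the other odd, so
  exactly one of its four rotations has coordinates congruent to (0, 1) modulo 4. Freeness holds
  because the nontrivial rotations fix only the origin, and disjointness is injectivity of phi.\<close>

lemma inj_phi: "inj phi"
  by (auto simp: inj_def phi_def)

lemma range_phi: "range phi = {(x, y). x mod 4 = 0 \<and> y mod 4 = 1}"
proof (intro set_eqI iffI)
  fix p :: "int \<times> int"
  assume "p \<in> {(x, y). x mod 4 = 0 \<and> y mod 4 = 1}"
  then obtain x y where p: "p = (x, y)" and x: "x mod 4 = 0" and y: "y mod 4 = 1"
    by auto
  have "x = 4 * (x div 4)" "y = 4 * (y div 4) + 1"
    using mult_div_mod_eq[of 4 x] mult_div_mod_eq[of 4 y] x y by simp_all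
  then have "p = phi (x div 4, y div 4)"
    by (simp add: phi_def p)
  then show "p \<in> range phi" by blast
qed (auto simp: phi_def)

lemma phi_in_U_iff: "phi q \<in> U (8 * int N + 1) \<longleftrightarrow> q \<in> Bhat1 N"
proof (cases q)
  case (Pair a b)
  have "(4 * a)\<^sup>2 + (4 * b + 1)\<^sup>2 = 8 * (2 * a\<^sup>2 + 2 * b\<^sup>2 + b) + 1"
    by (simp add: power2_eq_square algebra_simps)
  then have "phi q \<in> U (8 * int N + 1) \<longleftrightarrow> 8 * (2 * a\<^sup>2 + 2 * b\<^sup>2 + b) + 1 = 8 * int N + 1"
    unfolding Pair phi_def U_def by (simp add: algebra_simps)
  also have "\<dots> \<longleftrightarrow> q \<in> Bhat1 N"
    by (simp only: add_right_cancel mult_cancel_left) (simp add: Pair Bhat1_def)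
  finally show ?thesis .
qed

lemma phi_image_Bhat1: "phi ` Bhat1 N = range phi \<inter> U (8 * int N + 1)"
  using phi_in_U_iff by blast

lemma rot_funpow_fixed_point:
  assumes "0 < k" "k < 4" "(rot ^^ k) p = p"
  shows "p = (0, 0)"
proof -
  have "k = 1 \<or> k = 2 \<or> k = 3" using assms(1,2) by auto
  then show ?thesis
    using assms(3) by (cases p) (auto simp: rot_def numeral_eq_Suc)
qed

lemma C4_orbit_eq: "C4_orbit (x, y) = {(x, y), (- y, x), (- x, - y), (y, - x)}"
proof -
  have "{k::nat. k < 4} = {0, 1, 2, 3}" by auto
  then have "C4_orbit (x, y) = (\<lambda>k. (rot ^^ k) (x, y)) ` {0, 1, 2, 3}"
    unfolding C4_orbit_def by blast
  then show ?thesis by (simp add: rot_def numeral_eq_Suc)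
qed

lemma C4_orbit_subset_U: "u \<in> U m \<Longrightarrow> C4_orbit u \<subseteq> U m"
  by (cases u) (auto simp: C4_orbit_eq U_def)

lemma sum_squares_mod_8_eq_1:
  fixes x y :: int
  assumes "(x\<^sup>2 + y\<^sup>2) mod 8 = 1"
  shows "(x mod 4 = 0 \<and> odd y) \<or> (y mod 4 = 0 \<and> odd x)"
proof -
  have "((x mod 8)\<^sup>2 + (y mod 8)\<^sup>2) mod 8 = 1"
    using assms by (metis mod_add_eq power_mod)
  moreover have "x mod 4 = x mod 8 mod 4" "y mod 4 = y mod 8 mod 4"
    by (simp_all add: mod_mod_cancel)
  moreover have "odd x \<longleftrightarrow> odd (x mod 8)" "odd y \<longleftrightarrow> odd (y mod 8)"
    by presburger+
  moreover have "x mod 8 = 0 \<or> x mod 8 = 1 \<or> x mod 8 = 2 \<or> x mod 8 = 3 \<or>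
      x mod 8 = 4 \<or> x mod 8 = 5 \<or> x mod 8 = 6 \<or> x mod 8 = 7"
    "y mod 8 = 0 \<or> y mod 8 = 1 \<or> y mod 8 = 2 \<or> y mod 8 = 3 \<or>
      y mod 8 = 4 \<or> y mod 8 = 5 \<or> y mod 8 = 6 \<or> y mod 8 = 7"
    by presburger+
  ultimately show ?thesis
    by (elim disjE) simp_all
qed

lemma ex1_range_phi_Int_C4_orbit_if_mod_4_0_odd:
  fixes x y :: int
  assumes x: "x mod 4 = 0" and y: "odd y"
  shows "\<exists>!s. s \<in> range phi \<inter> C4_orbit (x, y)"
proof -
  have "y mod 4 \<noteq> 0" "(- y) mod 4 \<noteq> 0" "(- x) mod 4 = 0"
    using x y by presburger+
  then have orbit_part: "range phi \<inter> C4_orbit (x, y) = range phi \<inter> {(x, y), (- x, - y)}"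
    by (auto simp: range_phi C4_orbit_eq)
  have y_cases: "y mod 4 = 1 \<or> y mod 4 = 3"
    using y by presburger
  have minus_y: "(- y) mod 4 = 1 \<longleftrightarrow> y mod 4 = 3"
    by presburger
  from y_cases show ?thesis
  proof
    assume "y mod 4 = 1"
    then have "range phi \<inter> C4_orbit (x, y) = {(x, y)}"
      using orbit_part minus_y x by (auto simp: range_phi)
    then show ?thesis by auto
  next
    assume "y mod 4 = 3"
    then have "range phi \<inter> C4_orbit (x, y) = {(- x, - y)}"
      using orbit_part minus_y \<open>(- x) mod 4 = 0\<close> by (auto simp: range_phi)
    then show ?thesis by auto
  qed
qed

lemma ex1_range_phi_Int_C4_orbit:
  assumes "((fst u)\<^sup>2 + (snd u)\<^sup>2) mod 8 = 1"
  shows "\<exists>!s. s \<in> range phi \<inter> C4_orbit u"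
proof -
  obtain x y where u: "u = (x, y)" by force
  have "(x mod 4 = 0 \<and> odd y) \<or> (y mod 4 = 0 \<and> odd (- x))"
    using sum_squares_mod_8_eq_1[of x y] assms u by simp
  then show ?thesis
  proof
    assume "x mod 4 = 0 \<and> odd y"
    then show ?thesis using ex1_range_phi_Int_C4_orbit_if_mod_4_0_odd[of x y] u by simp
  next
    assume "y mod 4 = 0 \<and> odd (- x)"
    then have "\<exists>!s. s \<in> range phi \<inter> C4_orbit (y, - x)"
      using ex1_range_phi_Int_C4_orbit_if_mod_4_0_odd[of y "- x"] by simp
    moreover have "C4_orbit (y, - x) = C4_orbit u"
      by (auto simp: C4_orbit_eq u)
    ultimately show ?thesis by simp
  qed
qed

theorem theorem8p12:
  fixes N :: nat
  shows "(\<forall>u \<in> U (8 * int N + 1). \<forall>k::nat. 0 < k \<and> k < 4 \<longrightarrow> (rot ^^ k) u \<noteq> u)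
    \<and> phi ` (Bhat1 N \<inter> Mprime) \<inter> phi ` (Bhat1 N \<inter> (UNIV - Mprime)) = {}
    \<and> phi ` (Bhat1 N) \<subseteq> U (8 * int N + 1)
    \<and> (\<forall>u \<in> U (8 * int N + 1). \<exists>!s. s \<in> phi ` (Bhat1 N) \<and> s \<in> C4_orbit u)"
proof (intro conjI ballI allI impI)
  fix u k
  assume u: "u \<in> U (8 * int N + 1)" and k: "0 < k \<and> k < (4::nat)"
  have "u \<noteq> (0, 0)" using u by (auto simp: U_def)
  then show "(rot ^^ k) u \<noteq> u"
    using rot_funpow_fixed_point k by blast
next
  have "phi ` (Bhat1 N \<inter> Mprime) \<inter> phi ` (Bhat1 N \<inter> (UNIV - Mprime))
      = phi ` (Bhat1 N \<inter> Mprime \<inter> (Bhat1 N \<inter> (UNIV - Mprime)))"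
    by (rule image_Int[OF inj_phi, symmetric])
  then show "phi ` (Bhat1 N \<inter> Mprime) \<inter> phi ` (Bhat1 N \<inter> (UNIV - Mprime)) = {}"
    by blast
next
  show "phi ` Bhat1 N \<subseteq> U (8 * int N + 1)"
    by (simp add: phi_image_Bhat1)
next
  fix u
  assume u: "u \<in> U (8 * int N + 1)"
  then have "\<exists>!s. s \<in> range phi \<inter> C4_orbit u"
    by (intro ex1_range_phi_Int_C4_orbit) (auto simp: U_def)
  moreover have "C4_orbit u \<subseteq> U (8 * int N + 1)"
    using u by (rule C4_orbit_subset_U)
  ultimately show "\<exists>!s. s \<in> phi ` Bhat1 N \<and> s \<in> C4_orbit u"
    unfolding phi_image_Bhat1 by blast
qed

end
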